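(* Let $D$ be a total clone on $\{0,1\}$ with $D \subseteq T_{0,2}$. Then $\mathcal{I}_{\mathrm{str}}(D)$ has the cardinality of the continuum.
   Context: Let $\mathbf{2}=\{0,1\}$. A partial function of arity $n$ on $\mathbf{2}$ is a map $f:\operatorname{dom} f\to\mathbf{2}$ with $\operatorname{dom} f\subseteq \mathbf{2}^n$; it is total if $\operatorname{dom} f=\mathbf{2}^n$. $P_{\mathbf{2}}$ is the set of all partial functions, $O_{\mathbf{2}}$ the set of total ones. Composition $F=f(g_1,\dots,g_n)$ is given by $F(\mathbf{x})=f(g_1(\mathbf{x}),\dots,g_n(\mathbf{x}))$ on $\operatorname{dom} F=\{\mathbf{x}\in\bigcap_i\operatorname{dom} g_i : (g_1(\mathbf{x}),\dots,g_n(\mathbf{x}))\in\operatorname{dom} f\}$. A partial clone is a composition-closed subset of $P_{\mathbf{2}}$ containing all projections; a total clone is one contained in $O_{\mathbf{2}}$. A partial clone $X$ is strong if it contains every restriction of each of its members. For a total clone $C$, $\mathcal{I}_{\mathrm{str}}(C)$ is the set of all strong partial clones $X$ with $X\cap O_{\mathbf{2}}=C$. A total $n$-ary $f$ preserves a binary relation $\rho$ if for all $(a_1,b_1),\dots,(a_n,b_n)\in\rho$ we have $(f(a_1,\dots,a_n),f(b_1,\dots,b_n))\in\rho$. $T_{0,2}$ is the clone of all total Boolean functions preserving $\rho_{0,2}=\{(0,0),(0,1),(1,0)\}$. *)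

theory Defs
  imports Complex_Main "HOL-Library.Equipollence"
begin

text \<open>Partial Boolean functions: a pair (n, f) where n is the arity and
  f :: bool list \<Rightarrow> bool option is a partial map whose domain consists of
  lists of length n (False = 0, True = 1).\<close>

type_synonym pfun = "nat \<times> (bool list \<Rightarrow> bool option)"

definition is_pfun :: "pfun \<Rightarrow> bool" where
  "is_pfun F \<longleftrightarrow> fst F \<ge> 1 \<and> dom (snd F) \<subseteq> {xs. length xs = fst F}"

definition P2 :: "pfun set" where
  "P2 = {F. is_pfun F}"

definition is_total :: "pfun \<Rightarrow> bool" where
  "is_total F \<longleftrightarrow> dom (snd F) = {xs. length xs = fst F}"

definition O2 :: "pfun set" where
  "O2 = {F \<in> P2. is_total F}"

definition proj :: "nat \<Rightarrow> nat \<Rightarrow> pfun" where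
  "proj n i = (n, \<lambda>xs. if length xs = n then Some (xs ! i) else None)"

definition pcomp :: "nat \<Rightarrow> pfun \<Rightarrow> pfun list \<Rightarrow> pfun" where
  "pcomp m f gs = (m, \<lambda>xs. if length xs = m \<and> (\<forall>g\<in>set gs. snd g xs \<noteq> None)
                          then snd f (map (\<lambda>g. the (snd g xs)) gs) else None)"

definition partial_clone :: "pfun set \<Rightarrow> bool" where
  "partial_clone X \<longleftrightarrow> X \<subseteq> P2
     \<and> (\<forall>n i. 1 \<le> n \<and> i < n \<longrightarrow> proj n i \<in> X)
     \<and> (\<forall>m f gs. m \<ge> 1 \<and> f \<in> X \<and> set gs \<subseteq> X \<and> fst f = length gs
            \<and> (\<forall>g\<in>set gs. fst g = m) \<longrightarrow> pcomp m f gs \<in> X)"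

definition total_clone :: "pfun set \<Rightarrow> bool" where
  "total_clone C \<longleftrightarrow> partial_clone C \<and> C \<subseteq> O2"

definition strong_partial_clone :: "pfun set \<Rightarrow> bool" where
  "strong_partial_clone X \<longleftrightarrow> partial_clone X
     \<and> (\<forall>F\<in>X. \<forall>A. (fst F, snd F |` A) \<in> X)"

definition I_str :: "pfun set \<Rightarrow> pfun set set" where
  "I_str C = {X. strong_partial_clone X \<and> X \<inter> O2 = C}"

definition rho02 :: "(bool \<times> bool) set" where
  "rho02 = {(False, False), (False, True), (True, False)}"

definition preserves :: "pfun \<Rightarrow> (bool \<times> bool) set \<Rightarrow> bool" where
  "preserves F \<rho> \<longleftrightarrow> (\<forall>as bs. length as = fst F \<and> length bs = fst F
      \<and> (\<forall>i < fst F. (as ! i, bs ! i) \<in> \<rho>)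
      \<longrightarrow> (the (snd F as), the (snd F bs)) \<in> \<rho>)"

definition T02 :: "pfun set" where
  "T02 = {F \<in> O2. preserves F rho02}"

end

theory Submission
  imports Defs "HOL-Analysis.Abstract_Topology_2"
begin

text \<open>For a set \<open>S\<close> of naturals let \<open>X\<^sub>S\<close> consist of all restrictions of members of \<open>D\<close>
  together with all partial functions that are undefined at the all-zero tuple and preserve, for
  every \<open>k \<in> S\<close>, the relation of characteristic vectors of independent sets of a graph \<open>G\<^sub>k\<close>.
  Members of \<open>D \<subseteq> T02\<close> map the zero tuple to \<open>0\<close> and preserve all these relations, so a
  composition defined at zero involves only restrictions of \<open>D\<close>; hence \<open>X\<^sub>S\<close> is a strong partial
  clone whose total part is \<open>D\<close>.

  \<open>G\<^sub>k\<close> is an odd cycle of length \<open>2k + 5\<close> beside a clique on \<open>k + 4\<close> vertices. A homomorphism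
  \<open>G\<^sub>k \<rightarrow> G\<^sub>j\<close> with \<open>j \<noteq> k\<close> never hits the cycle of \<open>G\<^sub>j\<close> (the clique of \<open>G\<^sub>k\<close> is too large if
  \<open>j < k\<close>, the odd cycle of \<open>G\<^sub>k\<close> too short if \<open>k < j\<close>). Hence the partial function defined on
  tuples coding the vertices of \<open>G\<^sub>j\<close>, and true exactly at an edge of its cycle, preserves the
  relation of \<open>G\<^sub>k\<close> iff \<open>k \<noteq> j\<close>; it lies in \<open>X\<^sub>S\<close> iff \<open>j \<notin> S\<close>. So \<open>S \<mapsto> X\<^sub>S\<close> is injective,
  while \<open>P\<^sub>2\<close> is countable, which bounds \<open>I_str D\<close> by the continuum from above.\<close>

section \<open>Odd cycles\<close>

definition cycle_adj :: "nat \<Rightarrow> nat \<Rightarrow> nat \<Rightarrow> bool" where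
  "cycle_adj m u v \<longleftrightarrow> u < m \<and> v < m \<and> (v = Suc u mod m \<or> u = Suc v mod m)"

lemma cycle_adj_sym: "cycle_adj m u v \<longleftrightarrow> cycle_adj m v u"
  by (auto simp: cycle_adj_def)

lemma cycle_adj_less: "cycle_adj m u v \<Longrightarrow> u < m \<and> v < m"
  by (simp add: cycle_adj_def)

lemma cycle_adj_irrefl: "1 < m \<Longrightarrow> \<not> cycle_adj m u u"
  by (auto simp: cycle_adj_def) (metis Suc_lessI mod_less mod_self n_not_Suc_n)

lemma cycle_adj_mod_Suc: "0 < m \<Longrightarrow> cycle_adj m (i mod m) (Suc i mod m)"
  by (auto simp: cycle_adj_def mod_Suc_eq)

lemma sum_unit_signs:
  fixes s :: "nat \<Rightarrow> int"
  assumes "\<forall>t<L. s t = 1 \<or> s t = -1"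
  shows "(even (\<Sum>t<L. s t) \<longleftrightarrow> even L) \<and> \<bar>\<Sum>t<L. s t\<bar> \<le> int L"
  using assms
proof (induction L)
  case (Suc L)
  then have "s L = 1 \<or> s L = -1" and "even (\<Sum>t<L. s t) \<longleftrightarrow> even L"
    and "\<bar>\<Sum>t<L. s t\<bar> \<le> int L" by simp_all
  then show ?case by (auto simp: abs_le_iff)
qed simp

text \<open>Each step of a walk on the cycle changes the position by \<open>\<plusminus>1\<close> modulo \<open>m\<close>. For a closed
  walk the total displacement is a multiple of \<open>m\<close> of absolute value at most \<open>L < m\<close>, hence \<open>0\<close>,
  which is impossible for an odd number of \<open>\<plusminus>1\<close> steps.\<close>
lemma cycle_no_short_odd_closed_walk:
  fixes x :: "nat \<Rightarrow> nat"
  assumes walk: "\<forall>i<L. cycle_adj m (x i) (x (Suc i))" and closed: "x L = x 0"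
    and "odd L" and "L < m"
  shows False
proof -
  define s where "s i = (if x (Suc i) = Suc (x i) mod m then 1 else -1 :: int)" for i
  have step: "int (x (Suc i)) mod m = (int (x i) + s i) mod m" if "i < L" for i
  proof (cases "x (Suc i) = Suc (x i) mod m")
    case True
    then show ?thesis by (simp add: s_def zmod_int of_nat_mod mod_simps add.commute)
  next
    case False
    with walk that have "x i = Suc (x (Suc i)) mod m" by (auto simp: cycle_adj_def)
    then have "(int (x i) + s i) mod m = ((int (Suc (x (Suc i))) mod m) - 1) mod m"
      using False by (simp add: s_def zmod_int)
    then show ?thesis by (simp add: mod_simps)
  qed
  have displacement: "int (x i) mod m = (int (x 0) + (\<Sum>t<i. s t)) mod m" if "i \<le> L" for i
    using that
  proof (induction i)
    case (Suc i)
    have "int (x (Suc i)) mod m = (int (x i) mod m + s i) mod m"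
      using step Suc.prems by (simp add: mod_add_left_eq)
    also have "\<dots> = ((int (x 0) + (\<Sum>t<i. s t)) mod m + s i) mod m"
      using Suc by simp
    also have "\<dots> = (int (x 0) + (\<Sum>t<Suc i. s t)) mod m"
      by (simp add: mod_add_left_eq add.assoc)
    finally show ?case .
  qed simp
  have signs: "\<forall>t<L. s t = 1 \<or> s t = -1" by (simp add: s_def)
  have "int m dvd (\<Sum>t<L. s t)"
    using displacement[of L] closed by (simp add: mod_eq_dvd_iff algebra_simps)
  moreover have "\<bar>\<Sum>t<L. s t\<bar> < int m"
    using sum_unit_signs[OF signs] \<open>L < m\<close> by simp
  ultimately have "(\<Sum>t<L. s t) = 0" using dvd_imp_le_int by force
  with sum_unit_signs[OF signs] \<open>odd L\<close> show False by simp
qed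

section \<open>The graphs \<open>G\<^sub>k\<close>\<close>

definition graph_hom ::
    "(nat \<Rightarrow> nat \<Rightarrow> bool) \<Rightarrow> nat \<Rightarrow> (nat \<Rightarrow> nat \<Rightarrow> bool) \<Rightarrow> (nat \<Rightarrow> nat) \<Rightarrow> bool" where
  "graph_hom E n E' \<phi> \<longleftrightarrow> (\<forall>u<n. \<forall>v<n. E u v \<longrightarrow> E' (\<phi> u) (\<phi> v))"

definition gadget_cycle :: "nat \<Rightarrow> nat" where
  "gadget_cycle k = 2 * k + 5"

definition gadget_order :: "nat \<Rightarrow> nat" where
  "gadget_order k = gadget_cycle k + (k + 4)"

text \<open>The cycle has length at least 5, so every triangle lies in the clique.\<close>
definition gadget_adj :: "nat \<Rightarrow> nat \<Rightarrow> nat \<Rightarrow> bool" where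
  "gadget_adj k u v \<longleftrightarrow> cycle_adj (gadget_cycle k) u v
     \<or> (gadget_cycle k \<le> u \<and> gadget_cycle k \<le> v \<and> u < gadget_order k \<and> v < gadget_order k \<and> u \<noteq> v)"

lemma symp_gadget_adj: "symp (gadget_adj k)"
  by (auto simp: symp_def gadget_adj_def cycle_adj_sym)

lemma irreflp_gadget_adj: "irreflp (gadget_adj k)"
  using cycle_adj_irrefl[of "gadget_cycle k"] by (auto simp: irreflp_def gadget_adj_def gadget_cycle_def)

lemma gadget_adj_less: "gadget_adj k u v \<Longrightarrow> u < gadget_order k \<and> v < gadget_order k"
  by (auto simp: gadget_adj_def gadget_order_def dest: cycle_adj_less)

lemma gadget_adj_cycle: "gadget_adj k u v \<Longrightarrow> u < gadget_cycle k \<Longrightarrow> cycle_adj (gadget_cycle k) u v"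
  by (auto simp: gadget_adj_def)

lemma gadget_triangle_in_clique:
  assumes ab: "gadget_adj k a b" and bc: "gadget_adj k b c" and ca: "gadget_adj k c a"
  shows "gadget_cycle k \<le> a"
proof (rule ccontr)
  assume "\<not> gadget_cycle k \<le> a"
  then have "cycle_adj (gadget_cycle k) a b" using ab gadget_adj_cycle by simp
  then have "cycle_adj (gadget_cycle k) b c" using bc gadget_adj_cycle cycle_adj_def by blast
  then have "cycle_adj (gadget_cycle k) c a" using ca gadget_adj_cycle cycle_adj_def by blast
  let ?x = "\<lambda>i. [a, b, c, a] ! i"
  have "\<forall>i<3. cycle_adj (gadget_cycle k) (?x i) (?x (Suc i))"
    using \<open>cycle_adj _ a b\<close> \<open>cycle_adj _ b c\<close> \<open>cycle_adj _ c a\<close>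
    by (auto simp: less_Suc_eq numeral_3_eq_3)
  moreover have "?x 3 = ?x 0" by simp
  ultimately show False
    using cycle_no_short_odd_closed_walk[of 3 "gadget_cycle k" ?x] by (simp add: gadget_cycle_def)
qed

lemma gadget_clique_triangleE:
  assumes "gadget_cycle k \<le> u" "u < gadget_order k"
  obtains v w where "gadget_adj k u v" "gadget_adj k v w" "gadget_adj k w u"
proof -
  let ?c = "gadget_cycle k"
  have clique: "gadget_adj k x y"
    if "?c \<le> x" "x < gadget_order k" "?c \<le> y" "y < gadget_order k" "x \<noteq> y" for x y
    using that by (auto simp: gadget_adj_def)
  have "?c + 2 < gadget_order k" by (simp add: gadget_order_def)
  then consider "u = ?c" | "u = ?c + 1" | "?c + 1 < u"
    using assms(1) by linarith
  then show ?thesis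
  proof cases
    case 1
    then show ?thesis using assms \<open>?c + 2 < _\<close> by (intro that[of "?c + 1" "?c + 2"] clique) auto
  next
    case 2
    then show ?thesis using assms \<open>?c + 2 < _\<close> by (intro that[of "?c" "?c + 2"] clique) auto
  next
    case 3
    then show ?thesis using assms \<open>?c + 2 < _\<close> by (intro that[of "?c" "?c + 1"] clique) auto
  qed
qed

lemma graph_hom_gadget_clique:
  assumes hom: "graph_hom (gadget_adj k) (gadget_order k) (gadget_adj j) \<phi>"
    and "gadget_cycle k \<le> u" "u < gadget_order k"
  shows "gadget_cycle j \<le> \<phi> u \<and> \<phi> u < gadget_order j"
proof -
  obtain v w where "gadget_adj k u v" "gadget_adj k v w" "gadget_adj k w u"
    using gadget_clique_triangleE assms(2,3) by blast
  then have "gadget_adj j (\<phi> u) (\<phi> v)" "gadget_adj j (\<phi> v) (\<phi> w)" "gadget_adj j (\<phi> w) (\<phi> u)"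
    using hom gadget_adj_less unfolding graph_hom_def by blast+
  then show ?thesis using gadget_triangle_in_clique gadget_adj_less by blast
qed

lemma no_graph_hom_gadget_smaller:
  assumes "j < k"
  shows "\<not> graph_hom (gadget_adj k) (gadget_order k) (gadget_adj j) \<phi>"
proof
  assume hom: "graph_hom (gadget_adj k) (gadget_order k) (gadget_adj j) \<phi>"
  let ?C = "\<lambda>k. {gadget_cycle k..<gadget_order k}"
  have "inj_on \<phi> (?C k)"
  proof (rule inj_onI)
    fix u v assume uv: "u \<in> ?C k" "v \<in> ?C k" "\<phi> u = \<phi> v"
    show "u = v"
    proof (rule ccontr)
      assume "u \<noteq> v"
      with uv have "gadget_adj k u v" by (auto simp: gadget_adj_def)
      with hom uv have "gadget_adj j (\<phi> u) (\<phi> u)" by (auto simp: graph_hom_def)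
      then show False using irreflp_gadget_adj irreflpD by metis
    qed
  qed
  moreover have "\<phi> ` ?C k \<subseteq> ?C j"
    using graph_hom_gadget_clique[OF hom] by auto
  ultimately have "card (?C k) \<le> card (?C j)"
    using card_inj_on_le finite_atLeastLessThan by blast
  then show False using \<open>j < k\<close> by (simp add: gadget_order_def)
qed

lemma graph_hom_gadget_larger_cycle:
  assumes hom: "graph_hom (gadget_adj k) (gadget_order k) (gadget_adj j) \<phi>"
    and "k < j" and "u < gadget_cycle k"
  shows "gadget_cycle j \<le> \<phi> u"
proof (rule ccontr)
  let ?m = "gadget_cycle k"
  assume "\<not> gadget_cycle j \<le> \<phi> u"
  define x where "x i = \<phi> ((u + i) mod ?m)" for i
  have step: "gadget_adj j (x i) (x (Suc i))" for i
  proof -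
    have "cycle_adj ?m ((u + i) mod ?m) (Suc (u + i) mod ?m)"
      by (rule cycle_adj_mod_Suc) (simp add: gadget_cycle_def)
    then show ?thesis
      using hom by (auto simp: x_def graph_hom_def gadget_adj_def cycle_adj_def gadget_order_def)
  qed
  have on_cycle: "x i < gadget_cycle j" for i
  proof (induction i)
    case 0
    then show ?case using \<open>\<not> gadget_cycle j \<le> \<phi> u\<close> \<open>u < ?m\<close> by (simp add: x_def)
  next
    case (Suc i)
    then show ?case using gadget_adj_cycle[OF step] by (simp add: cycle_adj_def)
  qed
  have "\<forall>i<?m. cycle_adj (gadget_cycle j) (x i) (x (Suc i))"
    using gadget_adj_cycle step on_cycle by blast
  moreover have "x ?m = x 0" by (simp add: x_def)
  ultimately show False
    using cycle_no_short_odd_closed_walk[of ?m "gadget_cycle j" x] \<open>k < j\<close>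
    by (simp add: gadget_cycle_def)
qed

lemma graph_hom_gadget_distinct:
  assumes "graph_hom (gadget_adj k) (gadget_order k) (gadget_adj j) \<phi>"
    and "k \<noteq> j" and "u < gadget_order k"
  shows "gadget_cycle j \<le> \<phi> u"
proof (cases "u < gadget_cycle k")
  case True
  with assms show ?thesis
    using graph_hom_gadget_larger_cycle no_graph_hom_gadget_smaller by (metis linorder_neqE_nat)
next
  case False
  with assms show ?thesis using graph_hom_gadget_clique by simp
qed

section \<open>Partial polymorphisms of independent-set relations\<close>

definition disjoint_bits :: "bool list \<Rightarrow> bool list \<Rightarrow> bool" where
  "disjoint_bits xs ys \<longleftrightarrow> (\<forall>i<length xs. \<not> (xs ! i \<and> ys ! i))"

text \<open>\<open>F\<close> preserves the relation whose tuples, indexed by the vertices \<open>{..<n}\<close>, are the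
  characteristic vectors of independent sets of \<open>E\<close>. The argument tuples are the rows \<open>r v\<close>
  of a matrix whose columns lie in that relation, i.e.\ adjacent rows are disjoint.\<close>
definition preserves_indep :: "(nat \<Rightarrow> nat \<Rightarrow> bool) \<Rightarrow> nat \<Rightarrow> pfun \<Rightarrow> bool" where
  "preserves_indep E n F \<longleftrightarrow> (\<forall>r. (\<forall>v<n. r v \<in> dom (snd F))
      \<and> (\<forall>u<n. \<forall>v<n. E u v \<longrightarrow> disjoint_bits (r u) (r v))
      \<longrightarrow> (\<forall>u<n. \<forall>v<n. E u v \<longrightarrow> \<not> (snd F (r u) = Some True \<and> snd F (r v) = Some True)))"

lemma preserves_indepI:
  assumes "\<And>r u v. \<forall>v<n. r v \<in> dom (snd F) \<Longrightarrow>
      \<forall>u<n. \<forall>v<n. E u v \<longrightarrow> disjoint_bits (r u) (r v) \<Longrightarrow> u < n \<Longrightarrow> v < n \<Longrightarrow> E u v \<Longrightarrow>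
      snd F (r u) = Some True \<Longrightarrow> snd F (r v) = Some True \<Longrightarrow> False"
  shows "preserves_indep E n F"
  using assms unfolding preserves_indep_def by blast

lemma preserves_indepD:
  assumes "preserves_indep E n F" "\<forall>v<n. r v \<in> dom (snd F)"
    "\<forall>u<n. \<forall>v<n. E u v \<longrightarrow> disjoint_bits (r u) (r v)" "u < n" "v < n" "E u v"
  shows "\<not> (snd F (r u) = Some True \<and> snd F (r v) = Some True)"
  using assms unfolding preserves_indep_def by blast

lemma preserves_indep_map_le:
  assumes F: "preserves_indep E n F" and le: "snd G \<subseteq>\<^sub>m snd F"
  shows "preserves_indep E n G"
proof (rule preserves_indepI)
  fix r u v
  assume dom: "\<forall>v<n. r v \<in> dom (snd G)" and disj: "\<forall>u<n. \<forall>v<n. E u v \<longrightarrow> disjoint_bits (r u) (r v)"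
    and uv: "u < n" "v < n" "E u v" and true: "snd G (r u) = Some True" "snd G (r v) = Some True"
  have "\<forall>v<n. r v \<in> dom (snd F)"
    using dom map_le_implies_dom_le[OF le] by blast
  from preserves_indepD[OF F this disj uv] show False
    using true le by (metis domI map_le_def)
qed

lemma dom_pcompD:
  assumes "xs \<in> dom (snd (pcomp m f gs))"
  shows "length xs = m" "\<forall>g\<in>set gs. xs \<in> dom (snd g)"
    "snd (pcomp m f gs) xs = snd f (map (\<lambda>g. the (snd g xs)) gs)"
  using assms by (fastforce simp: pcomp_def split: if_splits)+

lemma preserves_indep_pcomp:
  assumes f: "preserves_indep E n f" and gs: "\<forall>g\<in>set gs. preserves_indep E n g"
  shows "preserves_indep E n (pcomp m f gs)"
proof (rule preserves_indepI)
  fix r u v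
  assume dom: "\<forall>v<n. r v \<in> dom (snd (pcomp m f gs))"
    and disj: "\<forall>u<n. \<forall>v<n. E u v \<longrightarrow> disjoint_bits (r u) (r v)"
    and uv: "u < n" "v < n" "E u v"
    and true: "snd (pcomp m f gs) (r u) = Some True" "snd (pcomp m f gs) (r v) = Some True"
  define r' where "r' v = map (\<lambda>g. the (snd g (r v))) gs" for v
  have inner: "(\<forall>g\<in>set gs. r v \<in> dom (snd g)) \<and> r' v \<in> dom (snd f)
      \<and> snd (pcomp m f gs) (r v) = snd f (r' v)" if "v < n" for v
  proof -
    have "r v \<in> dom (snd (pcomp m f gs))" using dom that by blast
    with dom_pcompD[OF this] show ?thesis by (auto simp: r'_def) (metis)
  qed
  have "disjoint_bits (r' x) (r' y)" if xy: "x < n" "y < n" "E x y" for x y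
    unfolding disjoint_bits_def
  proof (intro allI impI notI)
    fix i assume i: "i < length (r' x)" and both: "r' x ! i \<and> r' y ! i"
    then have g: "gs ! i \<in> set gs" by (simp add: r'_def)
    then have g_dom: "\<forall>v<n. r v \<in> dom (snd (gs ! i))" using inner by blast
    have "\<not> (snd (gs ! i) (r x) = Some True \<and> snd (gs ! i) (r y) = Some True)"
      using preserves_indepD[OF bspec[OF gs g] g_dom disj xy] .
    moreover have "r x \<in> dom (snd (gs ! i))" "r y \<in> dom (snd (gs ! i))"
      using g_dom xy by blast+
    ultimately show False using both i by (auto simp: r'_def)
  qed
  then have "\<forall>u<n. \<forall>v<n. E u v \<longrightarrow> disjoint_bits (r' u) (r' v)" by blast
  from preserves_indepD[OF f _ this uv] show False
    using true inner uv by simp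
qed

lemma T02_defined: "F \<in> T02 \<Longrightarrow> length xs = fst F \<Longrightarrow> xs \<in> dom (snd F)"
  by (auto simp: T02_def O2_def is_total_def)

lemma T02_disjoint_bits:
  assumes F: "F \<in> T02" and len: "length xs = fst F" "length ys = fst F"
    and "disjoint_bits xs ys"
  shows "\<not> (snd F xs = Some True \<and> snd F ys = Some True)"
proof -
  have "\<forall>i < fst F. (xs ! i, ys ! i) \<in> rho02"
    using len \<open>disjoint_bits xs ys\<close> by (auto simp: disjoint_bits_def rho02_def)
  then have "(the (snd F xs), the (snd F ys)) \<in> rho02"
    using F len unfolding T02_def preserves_def by blast
  then show ?thesis by (auto simp: rho02_def)
qed

lemma T02_zero:
  assumes F: "F \<in> T02"
  shows "snd F (replicate (fst F) False) = Some False"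
proof -
  let ?z = "replicate (fst F) False"
  have "?z \<in> dom (snd F)" using T02_defined[OF F] by simp
  moreover have "snd F ?z \<noteq> Some True"
    using T02_disjoint_bits[OF F, of ?z ?z] by (simp add: disjoint_bits_def)
  ultimately show ?thesis by auto
qed

lemma preserves_indep_T02:
  assumes F: "F \<in> T02"
  shows "preserves_indep E n F"
proof (rule preserves_indepI)
  fix r u v
  assume dom: "\<forall>v<n. r v \<in> dom (snd F)" and disj: "\<forall>u<n. \<forall>v<n. E u v \<longrightarrow> disjoint_bits (r u) (r v)"
    and uv: "u < n" "v < n" "E u v" and true: "snd F (r u) = Some True" "snd F (r v) = Some True"
  have "length xs = fst F" if "xs \<in> dom (snd F)" for xs
    using F that by (auto simp: T02_def O2_def P2_def is_pfun_def)
  then have "length (r u) = fst F" "length (r v) = fst F"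
    using dom uv by blast+
  from T02_disjoint_bits[OF F this] show False
    using disj uv true by blast
qed

section \<open>Coding vertices by tuples\<close>

text \<open>Coordinate \<open>a * n + b\<close> of a code stands for the pair \<open>(a, b)\<close> of vertices. For a
  symmetric irreflexive \<open>E\<close> the codes of \<open>u\<close> and \<open>v\<close> are disjoint iff \<open>E u v\<close>, so rows
  drawn from the codes form an admissible matrix for \<open>preserves_indep\<close> exactly when they
  come from a graph homomorphism.\<close>
definition vertex_code :: "(nat \<Rightarrow> nat \<Rightarrow> bool) \<Rightarrow> nat \<Rightarrow> nat \<Rightarrow> bool list" where
  "vertex_code E n v = map (\<lambda>i. (i div n = v \<or> i mod n = v) \<and> \<not> E (i div n) (i mod n)) [0..<n * n]"

lemma length_vertex_code [simp]: "length (vertex_code E n v) = n * n"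
  by (simp add: vertex_code_def)

lemma nth_vertex_code:
  "i < n * n \<Longrightarrow> vertex_code E n v ! i \<longleftrightarrow> (i div n = v \<or> i mod n = v) \<and> \<not> E (i div n) (i mod n)"
  by (simp add: vertex_code_def)

lemma pair_index:
  fixes a b n :: nat
  assumes "a < n" "b < n"
  shows "a * n + b < n * n" "(a * n + b) div n = a" "(a * n + b) mod n = b"
proof -
  have "a * n + b < (a + 1) * n" using assms by simp
  also have "\<dots> \<le> n * n" using assms by (intro mult_right_mono) auto
  finally show "a * n + b < n * n" .
qed (use assms in simp_all)

lemma nth_vertex_code_pair:
  "a < n \<Longrightarrow> b < n \<Longrightarrow> vertex_code E n v ! (a * n + b) \<longleftrightarrow> (a = v \<or> b = v) \<and> \<not> E a b"
  by (simp add: nth_vertex_code pair_index)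

lemma vertex_code_disjoint_iff:
  assumes E: "symp E" "irreflp E" and uv: "u < n" "v < n"
  shows "disjoint_bits (vertex_code E n u) (vertex_code E n v) \<longleftrightarrow> E u v"
proof
  assume disj: "disjoint_bits (vertex_code E n u) (vertex_code E n v)"
  show "E u v"
  proof (rule ccontr)
    assume "\<not> E u v"
    then have "vertex_code E n u ! (u * n + v) \<and> vertex_code E n v ! (u * n + v)"
      using uv by (simp add: nth_vertex_code_pair)
    then show False
      using disj pair_index(1)[OF uv] unfolding disjoint_bits_def length_vertex_code by blast
  qed
next
  assume "E u v"
  then have "u \<noteq> v" using E(2) by (auto simp: irreflp_def)
  show "disjoint_bits (vertex_code E n u) (vertex_code E n v)"
    unfolding disjoint_bits_def
  proof (intro allI impI notI)
    fix i
    assume "i < length (vertex_code E n u)" and "vertex_code E n u ! i \<and> vertex_code E n v ! i"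
    then have "(i div n = u \<and> i mod n = v \<or> i div n = v \<and> i mod n = u) \<and> \<not> E (i div n) (i mod n)"
      using \<open>u \<noteq> v\<close> by (auto simp: nth_vertex_code)
    then show False using \<open>E u v\<close> E(1) by (auto simp: symp_def)
  qed
qed

lemma vertex_code_ne_zero:
  assumes "irreflp E" "v < n"
  shows "vertex_code E n v \<noteq> replicate (n * n) False"
proof
  assume "vertex_code E n v = replicate (n * n) False"
  moreover have "vertex_code E n v ! (v * n + v)"
    using assms by (simp add: nth_vertex_code_pair irreflp_def)
  ultimately show False using pair_index(1)[OF assms(2,2)] by simp
qed

lemma inj_on_vertex_code:
  assumes "irreflp E"
  shows "inj_on (vertex_code E n) {..<n}"
proof (rule inj_onI)
  fix u v assume "u \<in> {..<n}" "v \<in> {..<n}" "vertex_code E n u = vertex_code E n v"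
  then show "u = v"
    using nth_vertex_code_pair[of u n u E u] nth_vertex_code_pair[of u n u E v] assms
    by (auto simp: irreflp_def)
qed

definition code_indicator :: "(nat \<Rightarrow> nat \<Rightarrow> bool) \<Rightarrow> nat \<Rightarrow> nat set \<Rightarrow> pfun" where
  "code_indicator E n T = (n * n, \<lambda>xs. if xs \<in> vertex_code E n ` {..<n}
      then Some (xs \<in> vertex_code E n ` T) else None)"

lemma fst_code_indicator [simp]: "fst (code_indicator E n T) = n * n"
  by (simp add: code_indicator_def)

lemma dom_code_indicator: "dom (snd (code_indicator E n T)) = vertex_code E n ` {..<n}"
  by (auto simp: code_indicator_def dom_def)

lemma code_indicator_vertex_code:
  assumes "irreflp E" "T \<subseteq> {..<n}" "v < n"
  shows "snd (code_indicator E n T) (vertex_code E n v) = Some (v \<in> T)"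
proof -
  have "vertex_code E n v \<in> vertex_code E n ` T \<longleftrightarrow> v \<in> T"
    using inj_on_image_mem_iff[OF inj_on_vertex_code[OF assms(1)]] assms(2,3) by blast
  then show ?thesis using assms(3) by (simp add: code_indicator_def)
qed

lemma code_indicator_P2: "0 < n \<Longrightarrow> code_indicator E n T \<in> P2"
  by (auto simp: P2_def is_pfun_def dom_code_indicator)

lemma code_indicator_zero_undefined:
  assumes "irreflp E"
  shows "replicate (fst (code_indicator E n T)) False \<notin> dom (snd (code_indicator E n T))"
  using vertex_code_ne_zero[OF assms] by (auto simp: dom_code_indicator dest: sym)

lemma not_preserves_indep_code_indicator:
  assumes E: "symp E" "irreflp E" and T: "T \<subseteq> {..<n}" and ab: "a \<in> T" "b \<in> T" "E a b"
  shows "\<not> preserves_indep E n (code_indicator E n T)"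
proof
  assume pres: "preserves_indep E n (code_indicator E n T)"
  have "\<forall>v<n. vertex_code E n v \<in> dom (snd (code_indicator E n T))"
    by (simp add: dom_code_indicator)
  moreover have "\<forall>u<n. \<forall>v<n. E u v \<longrightarrow> disjoint_bits (vertex_code E n u) (vertex_code E n v)"
    using vertex_code_disjoint_iff[OF E] by blast
  moreover have "a < n" "b < n" using T ab by auto
  ultimately have "\<not> (snd (code_indicator E n T) (vertex_code E n a) = Some True
      \<and> snd (code_indicator E n T) (vertex_code E n b) = Some True)"
    using preserves_indepD[OF pres] ab(3) by blast
  then show False
    using code_indicator_vertex_code[OF E(2) T] \<open>a < n\<close> \<open>b < n\<close> ab by simp
qed

text \<open>An admissible matrix of arguments consists of codes and hence comes from a homomorphism.\<close>
lemma preserves_indep_code_indicator: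
  assumes E': "symp E'" "irreflp E'" and T: "T \<subseteq> {..<n'}"
    and no_edge_into_T: "\<And>\<phi> u v. graph_hom E n E' \<phi> \<Longrightarrow> u < n \<Longrightarrow> v < n \<Longrightarrow> E u v
      \<Longrightarrow> \<phi> u \<in> T \<Longrightarrow> \<phi> v \<in> T \<Longrightarrow> False"
  shows "preserves_indep E n (code_indicator E' n' T)"
proof (rule preserves_indepI)
  fix r u v
  assume dom: "\<forall>v<n. r v \<in> dom (snd (code_indicator E' n' T))"
    and disj: "\<forall>u<n. \<forall>v<n. E u v \<longrightarrow> disjoint_bits (r u) (r v)"
    and uv: "u < n" "v < n" "E u v"
    and true: "snd (code_indicator E' n' T) (r u) = Some True"
      "snd (code_indicator E' n' T) (r v) = Some True"
  define \<phi> where "\<phi> = inv_into {..<n'} (vertex_code E' n') \<circ> r"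
  have \<phi>: "\<phi> x < n' \<and> r x = vertex_code E' n' (\<phi> x)" if "x < n" for x
  proof -
    have code: "r x \<in> vertex_code E' n' ` {..<n'}" using dom that by (simp add: dom_code_indicator)
    show ?thesis using inv_into_into[OF code] f_inv_into_f[OF code] by (simp add: \<phi>_def)
  qed
  have hom: "graph_hom E n E' \<phi>"
    unfolding graph_hom_def
  proof (intro allI impI)
    fix x y assume "x < n" "y < n" "E x y"
    moreover from this have "disjoint_bits (r x) (r y)" using disj by blast
    ultimately show "E' (\<phi> x) (\<phi> y)" using \<phi> vertex_code_disjoint_iff[OF E'] by simp
  qed
  have in_T: "\<phi> x \<in> T" if "x < n" "snd (code_indicator E' n' T) (r x) = Some True" for x
    using that \<phi>[OF that(1)] code_indicator_vertex_code[OF E'(2) T] by auto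
  show False using no_edge_into_T[OF hom uv in_T[OF uv(1) true(1)] in_T[OF uv(2) true(2)]] .
qed

section \<open>Strong partial clones with a given total part\<close>

definition restrictions :: "pfun set \<Rightarrow> pfun set" where
  "restrictions D = {F. \<exists>h\<in>D. fst F = fst h \<and> snd F \<subseteq>\<^sub>m snd h}"

lemma restrictionsI: "h \<in> D \<Longrightarrow> fst F = fst h \<Longrightarrow> snd F \<subseteq>\<^sub>m snd h \<Longrightarrow> F \<in> restrictions D"
  by (auto simp: restrictions_def)

lemma subset_restrictions: "D \<subseteq> restrictions D"
  by (auto simp: restrictions_def)

lemma restrict_map_le: "m |` A \<subseteq>\<^sub>m m"
  by (auto simp: map_le_def)

lemma restrictions_restrict: "F \<in> restrictions D \<Longrightarrow> (fst F, snd F |` A) \<in> restrictions D"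
  using map_le_trans[OF restrict_map_le] by (auto simp: restrictions_def)

lemma restrictions_subset_P2: "D \<subseteq> P2 \<Longrightarrow> restrictions D \<subseteq> P2"
  by (fastforce simp: restrictions_def P2_def is_pfun_def dest: map_le_implies_dom_le)

lemma restrictions_Int_O2: "D \<subseteq> O2 \<Longrightarrow> restrictions D \<inter> O2 \<subseteq> D"
proof
  fix F assume D: "D \<subseteq> O2" and "F \<in> restrictions D \<inter> O2"
  then obtain h where h: "h \<in> D" "fst F = fst h" "snd F \<subseteq>\<^sub>m snd h" and "F \<in> O2"
    by (auto simp: restrictions_def)
  then have "dom (snd h) \<subseteq> dom (snd F)"
    using D by (auto simp: O2_def is_total_def)
  then have "snd F = snd h"
    using h(3) by (metis map_le_antisym map_le_def subsetD)
  then show "F \<in> D" using h by (metis prod.collapse)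
qed

lemma pcomp_map_le:
  assumes f: "snd f \<subseteq>\<^sub>m snd h" and gs: "\<And>g. g \<in> set gs \<Longrightarrow> snd g \<subseteq>\<^sub>m snd (H g)"
  shows "snd (pcomp m f gs) \<subseteq>\<^sub>m snd (pcomp m h (map H gs))"
  unfolding map_le_def
proof
  fix xs assume xs: "xs \<in> dom (snd (pcomp m f gs))"
  have inner: "snd (H g) xs = snd g xs \<and> xs \<in> dom (snd g)" if "g \<in> set gs" for g
    using dom_pcompD(2)[OF xs] gs[OF that] that by (auto simp: map_le_def)
  then have args: "map (\<lambda>g. the (snd (H g) xs)) gs = map (\<lambda>g. the (snd g xs)) gs" by simp
  have "map (\<lambda>g. the (snd g xs)) gs \<in> dom (snd f)"
    using xs dom_pcompD(3)[OF xs] by (simp add: domIff)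
  then have outer: "snd f (map (\<lambda>g. the (snd g xs)) gs) = snd h (map (\<lambda>g. the (snd g xs)) gs)"
    using f by (auto simp: map_le_def)
  have "snd (pcomp m h (map H gs)) xs = snd h (map (\<lambda>g. the (snd (H g) xs)) gs)"
    using dom_pcompD(1)[OF xs] inner by (auto simp: pcomp_def o_def)
  then show "snd (pcomp m f gs) xs = snd (pcomp m h (map H gs)) xs"
    using dom_pcompD(3)[OF xs] outer args by simp
qed

lemma partial_clone_pcomp:
  "partial_clone X \<Longrightarrow> 1 \<le> m \<Longrightarrow> f \<in> X \<Longrightarrow> set gs \<subseteq> X \<Longrightarrow> fst f = length gs
    \<Longrightarrow> \<forall>g\<in>set gs. fst g = m \<Longrightarrow> pcomp m f gs \<in> X"
  unfolding partial_clone_def by blast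

lemma restrictions_pcomp:
  assumes D: "partial_clone D" and m: "1 \<le> m" and f: "f \<in> restrictions D"
    and gs: "set gs \<subseteq> restrictions D" and arity: "fst f = length gs" "\<forall>g\<in>set gs. fst g = m"
  shows "pcomp m f gs \<in> restrictions D"
proof -
  obtain h where h: "h \<in> D" "fst f = fst h" "snd f \<subseteq>\<^sub>m snd h"
    using f by (auto simp: restrictions_def)
  have "\<forall>g\<in>set gs. \<exists>h\<in>D. fst g = fst h \<and> snd g \<subseteq>\<^sub>m snd h"
    using gs by (auto simp: restrictions_def)
  then obtain H where H: "\<forall>g\<in>set gs. H g \<in> D \<and> fst g = fst (H g) \<and> snd g \<subseteq>\<^sub>m snd (H g)"
    by metis
  have "pcomp m h (map H gs) \<in> D"
    using partial_clone_pcomp[OF D m h(1), of "map H gs"] h(2) H arity by auto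
  moreover have "snd (pcomp m f gs) \<subseteq>\<^sub>m snd (pcomp m h (map H gs))"
    using pcomp_map_le h(3) H by blast
  ultimately show ?thesis by (auto simp: pcomp_def intro: restrictionsI)
qed

lemma pcomp_P2: "1 \<le> m \<Longrightarrow> pcomp m f gs \<in> P2"
  by (auto simp: pcomp_def P2_def is_pfun_def split: if_splits)

definition zero_free_extension :: "pfun set \<Rightarrow> (pfun \<Rightarrow> bool) \<Rightarrow> pfun set" where
  "zero_free_extension D Q =
     restrictions D \<union> {F \<in> P2. replicate (fst F) False \<notin> dom (snd F) \<and> Q F}"

context
  fixes D :: "pfun set" and Q :: "pfun \<Rightarrow> bool"
  assumes D: "total_clone D"
    and D_zero: "\<And>h. h \<in> D \<Longrightarrow> snd h (replicate (fst h) False) = Some False"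
    and D_Q: "\<And>h. h \<in> D \<Longrightarrow> Q h"
    and Q_map_le: "\<And>F G. Q F \<Longrightarrow> snd G \<subseteq>\<^sub>m snd F \<Longrightarrow> Q G"
    and Q_pcomp: "\<And>m f gs. Q f \<Longrightarrow> \<forall>g\<in>set gs. Q g \<Longrightarrow> Q (pcomp m f gs)"
begin

lemma restrictions_zero:
  assumes "F \<in> restrictions D" and z: "replicate (fst F) False \<in> dom (snd F)"
  shows "snd F (replicate (fst F) False) = Some False"
proof -
  obtain h where "h \<in> D" "fst F = fst h" "snd F \<subseteq>\<^sub>m snd h"
    using assms(1) by (auto simp: restrictions_def)
  then show ?thesis using z D_zero by (simp add: map_le_def)
qed

lemma zero_free_extension_Q:
  assumes "F \<in> zero_free_extension D Q"
  shows "Q F"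
proof (cases "F \<in> restrictions D")
  case True
  then obtain h where "h \<in> D" "snd F \<subseteq>\<^sub>m snd h" by (auto simp: restrictions_def)
  then show ?thesis using D_Q Q_map_le by blast
next
  case False
  then show ?thesis using assms by (simp add: zero_free_extension_def)
qed

text \<open>A composition defined at the all-zero tuple involves only restrictions of \<open>D\<close>: each inner
  function is defined at zero, hence a restriction, hence returns \<open>0\<close> there, so the outer
  function is also defined at zero.\<close>
lemma zero_free_extension_pcomp:
  assumes m: "1 \<le> m" and f: "f \<in> zero_free_extension D Q" and gs: "set gs \<subseteq> zero_free_extension D Q"
    and arity: "fst f = length gs" "\<forall>g\<in>set gs. fst g = m"
  shows "pcomp m f gs \<in> zero_free_extension D Q"
proof (cases "replicate m False \<in> dom (snd (pcomp m f gs))")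
  case True
  note defined = dom_pcompD[OF True]
  have g_restr: "g \<in> restrictions D \<and> snd g (replicate m False) = Some False" if "g \<in> set gs" for g
  proof -
    have "replicate (fst g) False \<in> dom (snd g)" using defined(2) arity(2) that by auto
    then have "g \<in> restrictions D" using gs that by (auto simp: zero_free_extension_def)
    then show ?thesis
      using restrictions_zero[OF _ \<open>replicate (fst g) False \<in> _\<close>] arity(2) that by simp
  qed
  then have "map (\<lambda>g. the (snd g (replicate m False))) gs = replicate (fst f) False"
    using arity(1) by (simp add: map_replicate_const[symmetric] cong: map_cong)
  then have "replicate (fst f) False \<in> dom (snd f)"
    using True defined(3) by (metis domIff)
  then have "f \<in> restrictions D" using f by (auto simp: zero_free_extension_def)
  then have "pcomp m f gs \<in> restrictions D"
    using restrictions_pcomp D m g_restr arity unfolding total_clone_def by blast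
  then show ?thesis by (simp add: zero_free_extension_def)
next
  case False
  have "Q (pcomp m f gs)"
    using Q_pcomp zero_free_extension_Q f gs by blast
  then show ?thesis
    using False pcomp_P2[OF m] by (simp add: zero_free_extension_def pcomp_def)
qed

lemma zero_free_extension_in_I_str: "zero_free_extension D Q \<in> I_str D"
proof -
  have D_sub: "D \<subseteq> P2" "D \<subseteq> O2" "partial_clone D"
    using D by (auto simp: total_clone_def partial_clone_def)
  have "partial_clone (zero_free_extension D Q)"
    unfolding partial_clone_def
  proof (intro conjI allI impI)
    show "zero_free_extension D Q \<subseteq> P2"
      using restrictions_subset_P2[OF D_sub(1)] by (auto simp: zero_free_extension_def)
    show "proj n i \<in> zero_free_extension D Q" if "1 \<le> n \<and> i < n" for n i
      using that D_sub(3) subset_restrictions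
      unfolding partial_clone_def zero_free_extension_def by blast
    show "pcomp m f gs \<in> zero_free_extension D Q"
      if "1 \<le> m \<and> f \<in> zero_free_extension D Q \<and> set gs \<subseteq> zero_free_extension D Q
        \<and> fst f = length gs \<and> (\<forall>g\<in>set gs. fst g = m)" for m f gs
      using that zero_free_extension_pcomp by blast
  qed
  moreover have "(fst F, snd F |` A) \<in> zero_free_extension D Q"
    if F: "F \<in> zero_free_extension D Q" for F A
  proof (cases "F \<in> restrictions D")
    case True
    then show ?thesis using restrictions_restrict by (simp add: zero_free_extension_def)
  next
    case False
    then have "F \<in> P2" "replicate (fst F) False \<notin> dom (snd F)" "Q F"
      using F by (auto simp: zero_free_extension_def)
    moreover have "Q (fst F, snd F |` A)" by (rule Q_map_le[OF \<open>Q F\<close>]) (simp add: restrict_map_le)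
    ultimately show ?thesis by (auto simp: zero_free_extension_def P2_def is_pfun_def)
  qed
  moreover have "zero_free_extension D Q \<inter> O2 = D"
  proof -
    have "replicate (fst F) False \<in> dom (snd F)" if "F \<in> O2" for F
      using that by (auto simp: O2_def is_total_def)
    then have "{F \<in> P2. replicate (fst F) False \<notin> dom (snd F) \<and> Q F} \<inter> O2 = {}" by blast
    moreover have "D \<subseteq> restrictions D" by (rule subset_restrictions)
    ultimately show ?thesis
      using restrictions_Int_O2[OF D_sub(2)] D_sub(2) unfolding zero_free_extension_def by blast
  qed
  ultimately show ?thesis by (auto simp: I_str_def strong_partial_clone_def)
qed

end

section \<open>Continuum many strong partial clones\<close>

definition gadget_witness :: "nat \<Rightarrow> pfun" where
  "gadget_witness k = code_indicator (gadget_adj k) (gadget_order k) {0, 1}"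

lemma preserves_indep_gadget_witness_iff:
  "preserves_indep (gadget_adj k) (gadget_order k) (gadget_witness j) \<longleftrightarrow> j \<noteq> k"
proof
  assume "preserves_indep (gadget_adj k) (gadget_order k) (gadget_witness j)"
  moreover have "\<not> preserves_indep (gadget_adj k) (gadget_order k) (gadget_witness k)"
    unfolding gadget_witness_def
    by (rule not_preserves_indep_code_indicator[OF symp_gadget_adj irreflp_gadget_adj,
          where a = 0 and b = 1])
      (auto simp: gadget_order_def gadget_cycle_def gadget_adj_def cycle_adj_def)
  ultimately show "j \<noteq> k" by blast
next
  assume "j \<noteq> k"
  show "preserves_indep (gadget_adj k) (gadget_order k) (gadget_witness j)"
    unfolding gadget_witness_def
  proof (rule preserves_indep_code_indicator[OF symp_gadget_adj irreflp_gadget_adj])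
    show "{0, 1} \<subseteq> {..<gadget_order j}" by (auto simp: gadget_order_def)
    fix \<phi> u v
    assume hom: "graph_hom (gadget_adj k) (gadget_order k) (gadget_adj j) \<phi>"
      and "u < gadget_order k" and "\<phi> u \<in> {0, 1}"
    have "gadget_cycle j \<le> \<phi> u"
      using graph_hom_gadget_distinct[OF hom _ \<open>u < gadget_order k\<close>] \<open>j \<noteq> k\<close> by simp
    with \<open>\<phi> u \<in> {0, 1}\<close> show False by (auto simp: gadget_cycle_def)
  qed
qed

definition gadget_clone :: "pfun set \<Rightarrow> nat set \<Rightarrow> pfun set" where
  "gadget_clone D S =
     zero_free_extension D (\<lambda>F. \<forall>k\<in>S. preserves_indep (gadget_adj k) (gadget_order k) F)"

lemma restrictions_T02_preserves_indep:
  assumes "D \<subseteq> T02" "F \<in> restrictions D"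
  shows "preserves_indep E n F"
proof -
  obtain h where "h \<in> D" and le: "snd F \<subseteq>\<^sub>m snd h"
    using assms(2) by (auto simp: restrictions_def)
  then have "h \<in> T02" using assms(1) by blast
  from preserves_indep_map_le[OF preserves_indep_T02[OF this] le] show ?thesis .
qed

lemma gadget_clone_in_I_str:
  assumes "total_clone D" "D \<subseteq> T02"
  shows "gadget_clone D S \<in> I_str D"
  unfolding gadget_clone_def
proof (rule zero_free_extension_in_I_str)
  show "total_clone D" by fact
  fix h assume "h \<in> D"
  then have "h \<in> T02" using assms(2) by blast
  then show "snd h (replicate (fst h) False) = Some False"
    and "\<forall>k\<in>S. preserves_indep (gadget_adj k) (gadget_order k) h"
    by (simp_all add: T02_zero preserves_indep_T02)
next
  fix F G :: pfun
  assume "\<forall>k\<in>S. preserves_indep (gadget_adj k) (gadget_order k) F" "snd G \<subseteq>\<^sub>m snd F"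
  then show "\<forall>k\<in>S. preserves_indep (gadget_adj k) (gadget_order k) G"
    using preserves_indep_map_le by blast
next
  fix m f gs
  assume "\<forall>k\<in>S. preserves_indep (gadget_adj k) (gadget_order k) f"
    "\<forall>g\<in>set gs. \<forall>k\<in>S. preserves_indep (gadget_adj k) (gadget_order k) g"
  then show "\<forall>k\<in>S. preserves_indep (gadget_adj k) (gadget_order k) (pcomp m f gs)"
    by (simp add: preserves_indep_pcomp)
qed

lemma gadget_witness_in_gadget_clone_iff:
  assumes "D \<subseteq> T02"
  shows "gadget_witness j \<in> gadget_clone D S \<longleftrightarrow> j \<notin> S"
proof -
  have "gadget_witness j \<notin> restrictions D"
    using restrictions_T02_preserves_indep[OF assms] preserves_indep_gadget_witness_iff by blast
  moreover have "gadget_witness j \<in> P2"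
    unfolding gadget_witness_def by (rule code_indicator_P2) (simp add: gadget_order_def)
  moreover have "replicate (fst (gadget_witness j)) False \<notin> dom (snd (gadget_witness j))"
    unfolding gadget_witness_def by (rule code_indicator_zero_undefined[OF irreflp_gadget_adj])
  ultimately show ?thesis
    using preserves_indep_gadget_witness_iff
    by (auto simp: gadget_clone_def zero_free_extension_def)
qed

lemma inj_gadget_clone:
  assumes "D \<subseteq> T02"
  shows "inj (gadget_clone D)"
proof (rule injI)
  fix S S' assume "gadget_clone D S = gadget_clone D S'"
  then show "S = S'"
    using gadget_witness_in_gadget_clone_iff[OF assms] by blast
qed

lemma countable_P2: "countable P2"
proof (rule countable_image_inj_on)
  let ?table = "\<lambda>F. (fst F, map (snd F) (List.n_lists (fst F) [False, True]))"
  show "countable (?table ` P2)" by simp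
  show "inj_on ?table P2"
  proof (rule inj_onI)
    fix F G assume F: "F \<in> P2" and G: "G \<in> P2" and eq: "?table F = ?table G"
    then have arity: "fst F = fst G" by simp
    with eq have "map (snd F) (List.n_lists (fst F) [False, True])
        = map (snd G) (List.n_lists (fst F) [False, True])" by simp
    then have table_eq: "\<forall>xs\<in>set (List.n_lists (fst F) [False, True]). snd F xs = snd G xs"
      by (simp only: map_eq_conv)
    have "snd F xs = snd G xs" for xs
    proof (cases "length xs = fst F")
      case True
      then have "xs \<in> set (List.n_lists (fst F) [False, True])" by (auto simp: set_n_lists)
      then show ?thesis using table_eq by blast
    next
      case False
      then have "xs \<notin> dom (snd F)" "xs \<notin> dom (snd G)"
        using F G arity by (auto simp: P2_def is_pfun_def)
      then show ?thesis by (simp add: domIff)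
    qed
    then show "F = G" using arity by (simp add: prod_eq_iff fun_eq_iff)
  qed
qed

lemma I_str_lepoll_nat_sets: "I_str D \<lesssim> (UNIV :: nat set set)"
proof -
  have "I_str D \<subseteq> Pow P2"
    by (auto simp: I_str_def strong_partial_clone_def partial_clone_def)
  moreover have "inj_on (image (to_nat_on P2)) (Pow P2)"
    by (rule inj_on_image_Pow[OF inj_on_to_nat_on[OF countable_P2]])
  ultimately show ?thesis
    unfolding lepoll_def by (meson inj_on_subset subset_UNIV)
qed

theorem mainTheorem4:
  assumes "total_clone D" and "D \<subseteq> T02"
  shows "I_str D \<approx> (UNIV :: real set)"
proof -
  have "(UNIV :: nat set set) \<lesssim> I_str D"
    unfolding lepoll_def using inj_gadget_clone gadget_clone_in_I_str assms by blast
  then have "I_str D \<approx> (UNIV :: nat set set)"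
    using lepoll_antisym I_str_lepoll_nat_sets by blast
  then show ?thesis using eqpoll_trans nat_sets_eqpoll_reals by blast
qed

end
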